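(* Let $(\mathbb S,+,\cdot)$ be an Essential S-Structure. Then $(\mathbb S,+,\cdot)$ is an S-Extension of $(\mathbb S_0,+,\cdot)$ (the operations of $\mathbb S$ restricted to $\mathbb S_0$).
   Context: An S-Structure is a triple $(\mathbb S,+,\cdot)$ where $\mathbb S$ is a set and $+,\cdot$ are binary operations on $\mathbb S$ such that: $(\mathbb S,+)$ is a commutative group with identity $0$ (the inverse of $s$ is written $-s$, and $s-t:=s+(-t)$); $\mathbb S$ is closed under $\cdot$; and there exists $s\in\mathbb S$ with $0\cdot s\neq 0$ or $s\cdot 0\neq 0$. Multiplication binds tighter than addition. The structures considered come with a distinguished element of $\mathbb S$ denoted $1$. It is Commutative if $s\cdot t=t\cdot s$ for all $s,t$. For a Commutative S-Structure and $\alpha\in\mathbb S$, put $\mathbb S_\alpha=\{s\in\mathbb S:0\cdot s=s\cdot 0=\alpha\}$ and $\Lambda=\{\alpha\in\mathbb S:\mathbb S_\alpha\neq\emptyset\}$. Wheel Distributive: $s\cdot(t+r)+(s\cdot 0)=(s\cdot t)+(s\cdot r)$ for all $s,t,r\in\mathbb S$. S-Associative: for all $m,n\in\mathbb S_0$ and $s\in\mathbb S$, $m\cdot(n\cdot s)=(m\cdot n)\cdot s-([(m-1)\cdot(n-1)]\cdot(0\cdot s))$. Base: if $\mathbb S_0\neq\emptyset$ and $\alpha\in\Lambda$, $q\in\mathbb S_\alpha$ is a Base for $\mathbb S_\alpha$ if $q+\beta\in\mathbb S_\alpha$ for all $\beta\in\mathbb S_0$ and every $s\in\mathbb S_\alpha$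 equals $q+\beta$ for some $\beta\in\mathbb S_0$. Coordinated: $\mathbb S_0\neq\emptyset$ and every $\mathbb S_\alpha$ with $\alpha\in\Lambda$ has a Base. Standard Bases: a Coordinated Commutative S-Structure has Standard Bases if there is a specified element $q_0(1)\in\mathbb S_1$ which is a Base for $\mathbb S_1$, and for every $\alpha\in\Lambda$ the element $q_0(\alpha):=\alpha\cdot(q_0(1)+1)-1$ lies in $\mathbb S_\alpha$ and is a Base for $\mathbb S_\alpha$. An Essential S-Structure is an S-Structure that is Commutative, Wheel Distributive, S-Associative, has Standard Bases (in particular is Coordinated), satisfies $0,1\in\mathbb S_0$, and satisfies $\mathbb S_0=\{1\cdot x:x\in\mathbb S_0\}$. S-Extension: $(\mathbb S_F,+,\cdot)$ is an S-Extension of $(F,+_F,\cdot_F)$ if (1) $F$ is closed under $+_F$ and under $\cdot_F$; (2) $(\mathbb S_F,+,\cdot)$ is an S-Structure; (3) there is a set $F_{\mathbb S}\subset\mathbb S_F$ and an isomorphism $\phi:(F,+_F,\cdot_F)\to(F_{\mathbb S},+,\cdot)$ (a bijection preserving both operations). *)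

theory Defs
  imports Main
begin

text \<open>The additive identity zero and additive inverse neg are passed explicitly but are
  required to be the (unique) identity and inverses of the commutative group (S,add).\<close>

definition s_structure ::
  "'a set \<Rightarrow> ('a \<Rightarrow> 'a \<Rightarrow> 'a) \<Rightarrow> ('a \<Rightarrow> 'a \<Rightarrow> 'a) \<Rightarrow> 'a \<Rightarrow> ('a \<Rightarrow> 'a) \<Rightarrow> 'a \<Rightarrow> bool" where
  "s_structure S add mul zero neg one \<longleftrightarrow>
     (\<forall>s\<in>S. \<forall>t\<in>S. add s t \<in> S) \<and>
     (\<forall>s\<in>S. \<forall>t\<in>S. \<forall>r\<in>S. add (add s t) r = add s (add t r)) \<and>
     (\<forall>s\<in>S. \<forall>t\<in>S. add s t = add t s) \<and>
     zero \<in> S \<and> (\<forall>s\<in>S. add zero s = s \<and> add s zero = s) \<and>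
     (\<forall>s\<in>S. neg s \<in> S \<and> add s (neg s) = zero \<and> add (neg s) s = zero) \<and>
     (\<forall>s\<in>S. \<forall>t\<in>S. mul s t \<in> S) \<and>
     (\<exists>s\<in>S. mul zero s \<noteq> zero \<or> mul s zero \<noteq> zero) \<and>
     one \<in> S"

definition s_commutative :: "'a set \<Rightarrow> ('a \<Rightarrow> 'a \<Rightarrow> 'a) \<Rightarrow> bool" where
  "s_commutative S mul \<longleftrightarrow> (\<forall>s\<in>S. \<forall>t\<in>S. mul s t = mul t s)"

definition s_fiber :: "'a set \<Rightarrow> ('a \<Rightarrow> 'a \<Rightarrow> 'a) \<Rightarrow> 'a \<Rightarrow> 'a \<Rightarrow> 'a set" where
  "s_fiber S mul zero \<alpha> = {s\<in>S. mul zero s = \<alpha> \<and> mul s zero = \<alpha>}"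

definition s_Lambda :: "'a set \<Rightarrow> ('a \<Rightarrow> 'a \<Rightarrow> 'a) \<Rightarrow> 'a \<Rightarrow> 'a set" where
  "s_Lambda S mul zero = {\<alpha>\<in>S. s_fiber S mul zero \<alpha> \<noteq> {}}"

definition wheel_distributive ::
  "'a set \<Rightarrow> ('a \<Rightarrow> 'a \<Rightarrow> 'a) \<Rightarrow> ('a \<Rightarrow> 'a \<Rightarrow> 'a) \<Rightarrow> 'a \<Rightarrow> bool" where
  "wheel_distributive S add mul zero \<longleftrightarrow>
     (\<forall>s\<in>S. \<forall>t\<in>S. \<forall>r\<in>S. add (mul s (add t r)) (mul s zero) = add (mul s t) (mul s r))"

definition s_associative ::
  "'a set \<Rightarrow> ('a \<Rightarrow> 'a \<Rightarrow> 'a) \<Rightarrow> ('a \<Rightarrow> 'a \<Rightarrow> 'a) \<Rightarrow> 'a \<Rightarrow> ('a \<Rightarrow> 'a) \<Rightarrow> 'a \<Rightarrow> bool" where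
  "s_associative S add mul zero neg one \<longleftrightarrow>
     (\<forall>m\<in>s_fiber S mul zero zero. \<forall>n\<in>s_fiber S mul zero zero. \<forall>s\<in>S.
        mul m (mul n s) =
        add (mul (mul m n) s)
            (neg (mul (mul (add m (neg one)) (add n (neg one))) (mul zero s))))"

definition is_base ::
  "'a set \<Rightarrow> ('a \<Rightarrow> 'a \<Rightarrow> 'a) \<Rightarrow> ('a \<Rightarrow> 'a \<Rightarrow> 'a) \<Rightarrow> 'a \<Rightarrow> 'a \<Rightarrow> 'a \<Rightarrow> bool" where
  "is_base S add mul zero \<alpha> q \<longleftrightarrow>
     s_fiber S mul zero zero \<noteq> {} \<and> \<alpha> \<in> s_Lambda S mul zero \<and>
     q \<in> s_fiber S mul zero \<alpha> \<and>
     (\<forall>\<beta>\<in>s_fiber S mul zero zero. add q \<beta> \<in> s_fiber S mul zero \<alpha>) \<and>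
     (\<forall>s\<in>s_fiber S mul zero \<alpha>. \<exists>\<beta>\<in>s_fiber S mul zero zero. s = add q \<beta>)"

definition coordinated ::
  "'a set \<Rightarrow> ('a \<Rightarrow> 'a \<Rightarrow> 'a) \<Rightarrow> ('a \<Rightarrow> 'a \<Rightarrow> 'a) \<Rightarrow> 'a \<Rightarrow> bool" where
  "coordinated S add mul zero \<longleftrightarrow>
     s_fiber S mul zero zero \<noteq> {} \<and>
     (\<forall>\<alpha>\<in>s_Lambda S mul zero. \<exists>q. is_base S add mul zero \<alpha> q)"

definition standard_bases ::
  "'a set \<Rightarrow> ('a \<Rightarrow> 'a \<Rightarrow> 'a) \<Rightarrow> ('a \<Rightarrow> 'a \<Rightarrow> 'a) \<Rightarrow> 'a \<Rightarrow> ('a \<Rightarrow> 'a) \<Rightarrow> 'a \<Rightarrow> bool" where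
  "standard_bases S add mul zero neg one \<longleftrightarrow>
     coordinated S add mul zero \<and> s_commutative S mul \<and>
     (\<exists>q1. q1 \<in> s_fiber S mul zero one \<and> is_base S add mul zero one q1 \<and>
        (\<forall>\<alpha>\<in>s_Lambda S mul zero.
           add (mul \<alpha> (add q1 one)) (neg one) \<in> s_fiber S mul zero \<alpha> \<and>
           is_base S add mul zero \<alpha> (add (mul \<alpha> (add q1 one)) (neg one))))"

definition essential_s_structure ::
  "'a set \<Rightarrow> ('a \<Rightarrow> 'a \<Rightarrow> 'a) \<Rightarrow> ('a \<Rightarrow> 'a \<Rightarrow> 'a) \<Rightarrow> 'a \<Rightarrow> ('a \<Rightarrow> 'a) \<Rightarrow> 'a \<Rightarrow> bool" where
  "essential_s_structure S add mul zero neg one \<longleftrightarrow>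
     s_structure S add mul zero neg one \<and> s_commutative S mul \<and>
     wheel_distributive S add mul zero \<and> s_associative S add mul zero neg one \<and>
     standard_bases S add mul zero neg one \<and>
     zero \<in> s_fiber S mul zero zero \<and> one \<in> s_fiber S mul zero zero \<and>
     s_fiber S mul zero zero = {mul one x | x. x \<in> s_fiber S mul zero zero}"

definition s_extension ::
  "'a set \<Rightarrow> ('a \<Rightarrow> 'a \<Rightarrow> 'a) \<Rightarrow> ('a \<Rightarrow> 'a \<Rightarrow> 'a) \<Rightarrow> 'a \<Rightarrow> ('a \<Rightarrow> 'a) \<Rightarrow> 'a \<Rightarrow>
   'b set \<Rightarrow> ('b \<Rightarrow> 'b \<Rightarrow> 'b) \<Rightarrow> ('b \<Rightarrow> 'b \<Rightarrow> 'b) \<Rightarrow> bool" where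
  "s_extension SF add mul zero neg one F addF mulF \<longleftrightarrow>
     (\<forall>x\<in>F. \<forall>y\<in>F. addF x y \<in> F \<and> mulF x y \<in> F) \<and>
     s_structure SF add mul zero neg one \<and>
     (\<exists>FS \<phi>. FS \<subseteq> SF \<and> bij_betw \<phi> F FS \<and>
        (\<forall>x\<in>F. \<forall>y\<in>F. \<phi> (addF x y) = add (\<phi> x) (\<phi> y) \<and> \<phi> (mulF x y) = mul (\<phi> x) (\<phi> y)))"

end

theory Submission
  imports Defs
begin

text \<open>The inclusion map embeds any subset of \<open>\<S>\<close> closed under both operations, so it suffices to show that \<open>\<S>\<^sub>0\<close> is closed under \<open>+\<close> and \<open>\<cdot>\<close>.
  Closure under \<open>+\<close> is Wheel Distributivity with \<open>s = 0\<close>. For \<open>\<cdot>\<close>, S-Associativity with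
  \<open>m = 0\<close> reads \<open>0\<cdot>(n\<cdot>s) = 0\<cdot>s - ((-1)\<cdot>(n - 1))\<cdot>(0\<cdot>s)\<close>; taking \<open>s = 0\<close> shows that the
  correction term vanishes, and then taking \<open>s \<in> \<S>\<^sub>0\<close> gives \<open>0\<cdot>(n\<cdot>s) = 0\<close>.\<close>

lemma s_extension_of_closed_subset:
  assumes "s_structure S add mul zero neg one" and "F \<subseteq> S"
    and "\<And>x y. x \<in> F \<Longrightarrow> y \<in> F \<Longrightarrow> add x y \<in> F"
    and "\<And>x y. x \<in> F \<Longrightarrow> y \<in> F \<Longrightarrow> mul x y \<in> F"
  shows "s_extension S add mul zero neg one F add mul"
  unfolding s_extension_def
proof (intro conjI)
  show "\<exists>FS \<phi>. FS \<subseteq> S \<and> bij_betw \<phi> F FS \<and>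
      (\<forall>x\<in>F. \<forall>y\<in>F. \<phi> (add x y) = add (\<phi> x) (\<phi> y) \<and> \<phi> (mul x y) = mul (\<phi> x) (\<phi> y))"
    using \<open>F \<subseteq> S\<close> by (intro exI[of _ F] exI[of _ id]) simp
qed (use assms in auto)

locale comm_wheel_s_structure =
  fixes S :: "'a set" and add mul :: "'a \<Rightarrow> 'a \<Rightarrow> 'a" and zero one :: 'a and neg :: "'a \<Rightarrow> 'a"
  assumes s_structure: "s_structure S add mul zero neg one"
    and commutative: "s_commutative S mul"
    and wheel_distributive: "wheel_distributive S add mul zero"
begin

abbreviation S0 :: "'a set" where "S0 \<equiv> s_fiber S mul zero zero"

lemma add_closed: "s \<in> S \<Longrightarrow> t \<in> S \<Longrightarrow> add s t \<in> S"
  and mul_closed: "s \<in> S \<Longrightarrow> t \<in> S \<Longrightarrow> mul s t \<in> S"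
  and neg_closed: "s \<in> S \<Longrightarrow> neg s \<in> S"
  and zero_closed: "zero \<in> S"
  and one_closed: "one \<in> S"
  and add_zero_right: "s \<in> S \<Longrightarrow> add s zero = s"
  and add_zero_left: "s \<in> S \<Longrightarrow> add zero s = s"
  and add_neg_right: "s \<in> S \<Longrightarrow> add s (neg s) = zero"
  using s_structure unfolding s_structure_def by auto

lemma neg_zero: "neg zero = zero"
  using add_neg_right[OF zero_closed] add_zero_left[OF neg_closed[OF zero_closed]] by simp

lemma neg_eq_zero_imp_eq_zero:
  assumes "s \<in> S" and "neg s = zero"
  shows "s = zero"
  using add_zero_right[OF \<open>s \<in> S\<close>] add_neg_right[OF \<open>s \<in> S\<close>] assms(2) by simp

lemma mul_commute: "s \<in> S \<Longrightarrow> t \<in> S \<Longrightarrow> mul s t = mul t s"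
  using commutative unfolding s_commutative_def by auto

lemma mem_S0_iff: "x \<in> S0 \<longleftrightarrow> x \<in> S \<and> mul zero x = zero"
  unfolding s_fiber_def using mul_commute zero_closed by auto

lemma wheel_distrib:
  "s \<in> S \<Longrightarrow> t \<in> S \<Longrightarrow> r \<in> S \<Longrightarrow> add (mul s (add t r)) (mul s zero) = add (mul s t) (mul s r)"
  using wheel_distributive unfolding wheel_distributive_def by auto

lemma S0_add_closed:
  assumes "zero \<in> S0" and "m \<in> S0" and "n \<in> S0"
  shows "add m n \<in> S0"
proof -
  have m: "m \<in> S" "mul zero m = zero" and n: "n \<in> S" "mul zero n = zero"
    and zz: "mul zero zero = zero"
    using assms mem_S0_iff by auto
  have "add (mul zero (add m n)) zero = zero"
    using wheel_distrib[OF zero_closed m(1) n(1)] zz m n add_zero_right zero_closed by simp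
  then have "mul zero (add m n) = zero"
    using add_zero_right mul_closed add_closed zero_closed m n by metis
  then show ?thesis
    using mem_S0_iff add_closed m n by auto
qed

context
  assumes s_associative: "s_associative S add mul zero neg one"
    and zero_in_S0: "zero \<in> S0"
begin

lemma mul_zero_zero: "mul zero zero = zero"
  using zero_in_S0 mem_S0_iff by auto

lemma s_assoc_zero_left:
  assumes "n \<in> S0" and "s \<in> S"
  shows "mul zero (mul n s) =
    add (mul zero s) (neg (mul (mul (neg one) (add n (neg one))) (mul zero s)))"
proof -
  have "mul zero n = zero" and "add zero (neg one) = neg one"
    using assms(1) mem_S0_iff add_zero_left neg_closed one_closed by auto
  with s_associative zero_in_S0 assms show ?thesis
    unfolding s_associative_def by auto
qed

lemma correction_term_vanishes:
  assumes "n \<in> S0"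
  shows "mul (mul (neg one) (add n (neg one))) zero = zero"
proof -
  let ?c = "mul (mul (neg one) (add n (neg one))) zero"
  have nS: "n \<in> S" and "mul n zero = zero"
    using assms mem_S0_iff mul_commute zero_closed by auto
  then have "zero = add zero (neg ?c)"
    using s_assoc_zero_left[OF assms zero_closed] mul_zero_zero by simp
  moreover have "?c \<in> S"
    using nS by (intro mul_closed add_closed neg_closed one_closed zero_closed)
  ultimately show ?thesis
    using neg_eq_zero_imp_eq_zero add_zero_left neg_closed by metis
qed

lemma S0_mul_closed:
  assumes "m \<in> S0" and "n \<in> S0"
  shows "mul m n \<in> S0"
proof -
  have nS: "n \<in> S" and n0: "mul zero n = zero"
    using assms(2) mem_S0_iff by auto
  have "mul zero (mul m n) = add zero (neg zero)"
    using s_assoc_zero_left[OF assms(1) nS] n0 correction_term_vanishes[OF assms(1)] by simp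
  also have "\<dots> = zero"
    using neg_zero add_zero_right zero_closed by simp
  finally show ?thesis
    using mem_S0_iff mul_closed assms by auto
qed

end

end

theorem theorem3p1p2:
  fixes S :: "'a set" and add mul :: "'a \<Rightarrow> 'a \<Rightarrow> 'a" and zero one :: 'a and neg :: "'a \<Rightarrow> 'a"
  assumes "essential_s_structure S add mul zero neg one"
  shows "s_extension S add mul zero neg one (s_fiber S mul zero zero) add mul"
proof -
  from assms interpret comm_wheel_s_structure S add mul zero one neg
    by unfold_locales (simp_all add: essential_s_structure_def)
  have sa: "s_associative S add mul zero neg one" and z: "zero \<in> S0"
    using assms by (simp_all add: essential_s_structure_def)
  show ?thesis
  proof (rule s_extension_of_closed_subset[OF s_structure])
    show "S0 \<subseteq> S" by (auto simp: s_fiber_def)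
  qed (use S0_add_closed[OF z] S0_mul_closed[OF sa z] in auto)
qed

end
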